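(* Let $\mathcal{C}\subseteq\mathbb{R}^n$ be a nonempty closed convex set. For any $\theta_0\in\mathcal{C}$, $$K_{\mathcal{C}}=\{v:\mathbb{R}_+v\subseteq F_{\mathcal{C}}(\theta_0)\}=\bigcap_{\sigma>0}\frac{F_{\mathcal{C}}(\theta_0)}{\sigma}.$$ Moreover, $K_{\mathcal{C}}\subseteq T_{\mathcal{C}}(\theta)$ for every $\theta\in\mathcal{C}$. If furthermore $F_{\mathcal{C}}(\theta_0)$ is a cone, then for $\theta\in\mathcal{C}$ the equality $K_{\mathcal{C}}=T_{\mathcal{C}}(\theta)$ holds if and only if $\theta_0-(\theta-\theta_0)\in\mathcal{C}$; in particular $K_{\mathcal{C}}=T_{\mathcal{C}}(\theta_0)=F_{\mathcal{C}}(\theta_0)$.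
   Context: For $\theta_0\in\mathcal{C}$: $F_{\mathcal{C}}(\theta_0)=\{\theta-\theta_0:\theta\in\mathcal{C}\}$, and the tangent cone is $T_{\mathcal{C}}(\theta_0)=\mathrm{cl}\{\alpha(\theta-\theta_0):\alpha\ge0,\theta\in\mathcal{C}\}$. The core cone is $K_{\mathcal{C}}=\bigcap_{\theta\in\mathcal{C}}T_{\mathcal{C}}(\theta)$. For $v\in\mathbb{R}^n$, $\mathbb{R}_+v=\{\alpha v:\alpha\ge0\}$, and $S/\sigma=\{s/\sigma:s\in S\}$. *)

theory Defs
  imports "HOL-Analysis.Analysis"
begin

definition feas_dirs :: "'a::euclidean_space set \<Rightarrow> 'a \<Rightarrow> 'a set" where
  "feas_dirs C \<theta>0 = {\<theta> - \<theta>0 | \<theta>. \<theta> \<in> C}"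

definition tangent_cone :: "'a::euclidean_space set \<Rightarrow> 'a \<Rightarrow> 'a set" where
  "tangent_cone C \<theta>0 = closure {\<alpha> *\<^sub>R (\<theta> - \<theta>0) | \<alpha> \<theta>. \<alpha> \<ge> 0 \<and> \<theta> \<in> C}"

definition core_cone :: "'a::euclidean_space set \<Rightarrow> 'a set" where
  "core_cone C = (\<Inter>\<theta>\<in>C. tangent_cone C \<theta>)"

end

theory Submission
  imports Defs
begin

text \<open>A direction \<open>v\<close> lies in every tangent cone of \<open>C\<close> iff the ray \<open>\<theta>0 + \<real>\<^sub>+ v\<close> lies in \<open>C\<close>.
  If the ray lies in \<open>C\<close>, then \<open>v\<close> is the limit as \<open>t \<rightarrow> 0\<^sup>+\<close> of the feasible directions
  \<open>v + t (\<theta>0 - \<theta>)\<close> at any \<open>\<theta> \<in> C\<close>. Conversely, if \<open>v\<close> is tangent everywhere, it makes an obtuse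
  angle with the outer normal at every projection point, so the squared distance of \<open>\<theta>0 + r v\<close>
  to \<open>C\<close> grows by at most \<open>h\<^sup>2 \<parallel>v\<parallel>\<^sup>2\<close> under \<open>r \<mapsto> r + h\<close>; splitting \<open>[0, s]\<close> into \<open>n\<close> steps shows
  it is \<open>0\<close>. When the feasible directions \<open>F\<close> form a cone, \<open>F\<close> is a closed convex cone, hence closed
  under addition, and \<open>c - \<theta> = (c - \<theta>0) + (\<theta>0 - \<theta>)\<close> shows that \<open>T\<^sub>C(\<theta>) \<subseteq> F\<close> as soon as
  \<open>\<theta>0 - \<theta> \<in> F\<close>.\<close>

lemma mem_feas_dirs_iff: "w \<in> feas_dirs C \<theta>0 \<longleftrightarrow> \<theta>0 + w \<in> C"
  unfolding feas_dirs_def by (auto intro!: exI[of _ "\<theta>0 + w"])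

lemma feas_dirs_eq_translation: "feas_dirs C \<theta>0 = (+) (- \<theta>0) ` C"
  unfolding feas_dirs_def by (auto simp: image_iff)

lemma diff_mem_tangent_cone:
  assumes "\<theta>' \<in> C"
  shows "\<theta>' - \<theta> \<in> tangent_cone C \<theta>"
proof -
  have "\<theta>' - \<theta> \<in> {\<alpha> *\<^sub>R (c - \<theta>) |\<alpha> c. \<alpha> \<ge> 0 \<and> c \<in> C}"
    using assms by (intro CollectI exI[of _ 1] exI[of _ \<theta>']) simp
  then show ?thesis
    unfolding tangent_cone_def by (rule closure_subset[THEN subsetD])
qed

lemma tangent_cone_subset_closed_cone:
  assumes "closed K" "cone K" "\<And>c. c \<in> C \<Longrightarrow> c - \<theta> \<in> K"
  shows "tangent_cone C \<theta> \<subseteq> K"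
  unfolding tangent_cone_def
  using assms by (intro closure_minimal) (auto simp: cone_def)

lemma inner_tangent_cone_nonpos:
  assumes "\<And>c. c \<in> C \<Longrightarrow> inner n (c - \<theta>) \<le> 0" "v \<in> tangent_cone C \<theta>"
  shows "inner n v \<le> 0"
proof -
  have "tangent_cone C \<theta> \<subseteq> {x. inner n x \<le> 0}"
    unfolding tangent_cone_def using assms(1)
    by (intro closure_minimal closed_halfspace_le) (auto simp: mult_nonneg_nonpos)
  then show ?thesis using assms(2) by auto
qed

lemma core_cone_subset_tangent_cone: "\<theta> \<in> C \<Longrightarrow> core_cone C \<subseteq> tangent_cone C \<theta>"
  unfolding core_cone_def by auto

lemma ray_direction_mem_tangent_cone:
  assumes "convex C" "\<theta> \<in> C" "\<And>\<alpha>. \<alpha> \<ge> 0 \<Longrightarrow> \<theta>0 + \<alpha> *\<^sub>R v \<in> C"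
  shows "v \<in> tangent_cone C \<theta>"
proof -
  let ?S = "{\<alpha> *\<^sub>R (c - \<theta>) |\<alpha> c. \<alpha> \<ge> 0 \<and> c \<in> C}"
  have "v + t *\<^sub>R (\<theta>0 - \<theta>) \<in> ?S" if t: "0 < t" "t \<le> 1" for t :: real
  proof -
    have "(1 - t) *\<^sub>R \<theta> + t *\<^sub>R (\<theta>0 + (1 / t) *\<^sub>R v) \<in> C"
      using t assms by (intro convexD_alt) auto
    moreover have "v + t *\<^sub>R (\<theta>0 - \<theta>) = 1 *\<^sub>R ((1 - t) *\<^sub>R \<theta> + t *\<^sub>R (\<theta>0 + (1 / t) *\<^sub>R v) - \<theta>)"
      using t by (simp add: algebra_simps)
    ultimately show ?thesis by fastforce
  qed
  then have "\<forall>\<^sub>F t in at_right 0. v + t *\<^sub>R (\<theta>0 - \<theta>) \<in> closure ?S"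
    unfolding eventually_at_right_field
    by (intro exI[of _ 1]) (auto intro: closure_subset[THEN subsetD])
  moreover have "((\<lambda>t. v + t *\<^sub>R (\<theta>0 - \<theta>)) \<longlongrightarrow> v) (at_right (0::real))"
    by (auto intro!: tendsto_eq_intros)
  ultimately show ?thesis
    unfolding tangent_cone_def by (intro Lim_in_closed_set) auto
qed

lemma dist_closest_point_add_scaleR_le:
  fixes C :: "'a::euclidean_space set"
  assumes "closed C" "convex C" "C \<noteq> {}" "v \<in> tangent_cone C (closest_point C x)" "h \<ge> 0"
  shows "(dist (x + h *\<^sub>R v) (closest_point C (x + h *\<^sub>R v)))\<^sup>2
           \<le> (dist x (closest_point C x))\<^sup>2 + h\<^sup>2 * (norm v)\<^sup>2"
proof -
  define q where "q = closest_point C x"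
  have "q \<in> C"
    unfolding q_def using closest_point_in_set assms(1,3) .
  have "inner (x - q) v \<le> 0"
    using inner_tangent_cone_nonpos closest_point_dot[OF assms(2,1)] assms(4)
    unfolding q_def by blast
  have "(dist (x + h *\<^sub>R v) (closest_point C (x + h *\<^sub>R v)))\<^sup>2 \<le> (dist (x + h *\<^sub>R v) q)\<^sup>2"
    using closest_point_le[OF assms(1) \<open>q \<in> C\<close>] by (intro power_mono) auto
  also have "\<dots> = (norm (x - q))\<^sup>2 + 2 * h * inner (x - q) v + h\<^sup>2 * (norm v)\<^sup>2"
    unfolding dist_norm power2_norm_eq_inner
    by (simp add: inner_add_left inner_add_right inner_diff_left inner_diff_right
        inner_commute algebra_simps power2_eq_square)
  also have "\<dots> \<le> (dist x q)\<^sup>2 + h\<^sup>2 * (norm v)\<^sup>2"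
    using \<open>inner (x - q) v \<le> 0\<close> assms(5) by (simp add: dist_norm mult_nonneg_nonpos)
  finally show ?thesis unfolding q_def .
qed

lemma nonpos_if_quadratic_increments:
  fixes f :: "real \<Rightarrow> real"
  assumes "f 0 \<le> 0" "\<And>r h. h \<ge> 0 \<Longrightarrow> f (r + h) \<le> f r + c * h\<^sup>2" "s \<ge> 0"
  shows "f s \<le> 0"
proof -
  have multiple: "f (real k * h) \<le> real k * c * h\<^sup>2" if "h \<ge> 0" for k h
  proof (induction k)
    case 0
    then show ?case using assms(1) by simp
  next
    case (Suc k)
    have "f (real (Suc k) * h) = f (real k * h + h)" by (simp add: algebra_simps)
    also have "\<dots> \<le> f (real k * h) + c * h\<^sup>2" using assms(2) that by blast
    also have "\<dots> \<le> real (Suc k) * c * h\<^sup>2" using Suc by (simp add: algebra_simps)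
    finally show ?case .
  qed
  have "f s \<le> c * s\<^sup>2 / real n" if "n \<ge> 1" for n
    using multiple[of "s / real n" n] assms(3) that by (simp add: power2_eq_square)
  moreover have "(\<lambda>n. c * s\<^sup>2 / real n) \<longlonglongrightarrow> 0"
    by (rule lim_const_over_n)
  ultimately show ?thesis
    by (intro LIMSEQ_le_const) auto
qed

lemma ray_subset_if_mem_all_tangent_cones:
  fixes C :: "'a::euclidean_space set"
  assumes "closed C" "convex C" "\<theta>0 \<in> C" "\<And>\<theta>. \<theta> \<in> C \<Longrightarrow> v \<in> tangent_cone C \<theta>" "s \<ge> 0"
  shows "\<theta>0 + s *\<^sub>R v \<in> C"
proof -
  have "C \<noteq> {}" using assms(3) by blast
  define D where "D r = (dist (\<theta>0 + r *\<^sub>R v) (closest_point C (\<theta>0 + r *\<^sub>R v)))\<^sup>2" for r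
  have "D s \<le> 0"
  proof (rule nonpos_if_quadratic_increments[where f = D and c = "(norm v)\<^sup>2"])
    show "D 0 \<le> 0"
      unfolding D_def using closest_point_self[OF assms(3)] by simp
    show "D (r + h) \<le> D r + (norm v)\<^sup>2 * h\<^sup>2" if "h \<ge> 0" for r h
      using dist_closest_point_add_scaleR_le[OF assms(1,2) \<open>C \<noteq> {}\<close>
          assms(4)[OF closest_point_in_set[OF assms(1) \<open>C \<noteq> {}\<close>]] that, of "\<theta>0 + r *\<^sub>R v"]
      unfolding D_def by (simp add: algebra_simps)
  qed (fact assms(5))
  then have "\<theta>0 + s *\<^sub>R v = closest_point C (\<theta>0 + s *\<^sub>R v)"
    unfolding D_def by simp
  then show ?thesis
    using closest_point_in_set[OF assms(1) \<open>C \<noteq> {}\<close>] by metis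
qed

lemma core_cone_eq_rays:
  fixes C :: "'a::euclidean_space set"
  assumes "closed C" "convex C" "\<theta>0 \<in> C"
  shows "core_cone C = {v. \<forall>\<alpha>::real. \<alpha> \<ge> 0 \<longrightarrow> \<alpha> *\<^sub>R v \<in> feas_dirs C \<theta>0}"
  unfolding core_cone_def mem_feas_dirs_iff
  using ray_subset_if_mem_all_tangent_cones[OF assms] ray_direction_mem_tangent_cone[OF assms(2)]
  by blast

lemma rays_eq_Inter_scaled:
  fixes S :: "'a::real_vector set"
  assumes "0 \<in> S"
  shows "{v. \<forall>\<alpha>::real. \<alpha> \<ge> 0 \<longrightarrow> \<alpha> *\<^sub>R v \<in> S} = (\<Inter>\<sigma>\<in>{\<sigma>::real. \<sigma> > 0}. (\<lambda>s. s /\<^sub>R \<sigma>) ` S)"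
proof (intro equalityI subsetI)
  fix v assume "v \<in> {v. \<forall>\<alpha>::real. \<alpha> \<ge> 0 \<longrightarrow> \<alpha> *\<^sub>R v \<in> S}"
  then have "v = (\<sigma> *\<^sub>R v) /\<^sub>R \<sigma> \<and> \<sigma> *\<^sub>R v \<in> S" if "\<sigma> > 0" for \<sigma> :: real
    using that by simp
  then show "v \<in> (\<Inter>\<sigma>\<in>{\<sigma>::real. \<sigma> > 0}. (\<lambda>s. s /\<^sub>R \<sigma>) ` S)"
    by blast
next
  fix v assume v: "v \<in> (\<Inter>\<sigma>\<in>{\<sigma>::real. \<sigma> > 0}. (\<lambda>s. s /\<^sub>R \<sigma>) ` S)"
  have "\<alpha> *\<^sub>R v \<in> S" if "\<alpha> > 0" for \<alpha> :: real
    using v that by auto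
  then show "v \<in> {v. \<forall>\<alpha>::real. \<alpha> \<ge> 0 \<longrightarrow> \<alpha> *\<^sub>R v \<in> S}"
    using assms by (auto simp: le_less)
qed

lemma core_cone_eq_feas_dirs_if_cone:
  fixes C :: "'a::euclidean_space set"
  assumes "closed C" "convex C" "\<theta>0 \<in> C" "cone (feas_dirs C \<theta>0)"
  shows "core_cone C = feas_dirs C \<theta>0"
  unfolding core_cone_eq_rays[OF assms(1-3)]
  using assms(4) unfolding cone_def by (auto dest: spec[of _ 1])

lemma core_cone_eq_tangent_cone_iff:
  fixes C :: "'a::euclidean_space set"
  assumes "closed C" "convex C" "\<theta>0 \<in> C" "cone (feas_dirs C \<theta>0)" "\<theta> \<in> C"
  shows "core_cone C = tangent_cone C \<theta> \<longleftrightarrow> \<theta>0 - (\<theta> - \<theta>0) \<in> C"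
proof -
  let ?F = "feas_dirs C \<theta>0"
  have core: "core_cone C = ?F"
    using core_cone_eq_feas_dirs_if_cone[OF assms(1-4)] .
  have reflection: "\<theta>0 - \<theta> \<in> ?F \<longleftrightarrow> \<theta>0 - (\<theta> - \<theta>0) \<in> C"
    by (simp add: mem_feas_dirs_iff algebra_simps)
  show ?thesis
  proof
    assume "core_cone C = tangent_cone C \<theta>"
    with core have "\<theta>0 - \<theta> \<in> ?F"
      using diff_mem_tangent_cone[OF assms(3)] by metis
    then show "\<theta>0 - (\<theta> - \<theta>0) \<in> C"
      using reflection by blast
  next
    assume "\<theta>0 - (\<theta> - \<theta>0) \<in> C"
    have "convex ?F"
      unfolding feas_dirs_eq_translation by (rule convex_translation[OF assms(2)])
    have "closed ?F"
      unfolding feas_dirs_eq_translation by (rule closed_translation[OF assms(1)])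
    have "c - \<theta> \<in> ?F" if "c \<in> C" for c
    proof -
      have "c - \<theta>0 \<in> ?F" "\<theta>0 - \<theta> \<in> ?F"
        using that reflection \<open>\<theta>0 - (\<theta> - \<theta>0) \<in> C\<close> by (simp_all add: mem_feas_dirs_iff)
      then have "(c - \<theta>0) + (\<theta>0 - \<theta>) \<in> ?F"
        using \<open>convex ?F\<close> assms(4) convex_cone[of ?F] by blast
      then show ?thesis by simp
    qed
    then have "tangent_cone C \<theta> \<subseteq> ?F"
      by (rule tangent_cone_subset_closed_cone[OF \<open>closed ?F\<close> assms(4)])
    then show "core_cone C = tangent_cone C \<theta>"
      using core_cone_subset_tangent_cone[OF assms(5)] core by blast
  qed
qed

theorem lemma7:
  fixes C :: "'a::euclidean_space set" and \<theta>0 :: 'a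
  assumes "C \<noteq> {}" and "closed C" and "convex C" and "\<theta>0 \<in> C"
  shows "core_cone C = {v. \<forall>\<alpha>::real. \<alpha> \<ge> 0 \<longrightarrow> \<alpha> *\<^sub>R v \<in> feas_dirs C \<theta>0}
       \<and> core_cone C = (\<Inter>\<sigma>\<in>{\<sigma>::real. \<sigma> > 0}. (\<lambda>s. s /\<^sub>R \<sigma>) ` feas_dirs C \<theta>0)
       \<and> (\<forall>\<theta>\<in>C. core_cone C \<subseteq> tangent_cone C \<theta>)
       \<and> (cone (feas_dirs C \<theta>0) \<longrightarrow>
           (\<forall>\<theta>\<in>C. core_cone C = tangent_cone C \<theta> \<longleftrightarrow> \<theta>0 - (\<theta> - \<theta>0) \<in> C)
           \<and> core_cone C = tangent_cone C \<theta>0 \<and> tangent_cone C \<theta>0 = feas_dirs C \<theta>0)"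
proof -
  have rays: "core_cone C = {v. \<forall>\<alpha>::real. \<alpha> \<ge> 0 \<longrightarrow> \<alpha> *\<^sub>R v \<in> feas_dirs C \<theta>0}"
    using core_cone_eq_rays[OF assms(2-4)] .
  moreover have "0 \<in> feas_dirs C \<theta>0"
    using assms(4) by (simp add: mem_feas_dirs_iff)
  ultimately have scaled: "core_cone C = (\<Inter>\<sigma>\<in>{\<sigma>::real. \<sigma> > 0}. (\<lambda>s. s /\<^sub>R \<sigma>) ` feas_dirs C \<theta>0)"
    by (simp only: rays_eq_Inter_scaled)
  have cone_case: "(\<forall>\<theta>\<in>C. core_cone C = tangent_cone C \<theta> \<longleftrightarrow> \<theta>0 - (\<theta> - \<theta>0) \<in> C)
      \<and> core_cone C = tangent_cone C \<theta>0 \<and> tangent_cone C \<theta>0 = feas_dirs C \<theta>0"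
    if cone: "cone (feas_dirs C \<theta>0)"
  proof -
    have iff: "\<forall>\<theta>\<in>C. core_cone C = tangent_cone C \<theta> \<longleftrightarrow> \<theta>0 - (\<theta> - \<theta>0) \<in> C"
      using core_cone_eq_tangent_cone_iff[OF assms(2-4) cone] by blast
    then have "core_cone C = tangent_cone C \<theta>0"
      using assms(4) by simp
    with iff show ?thesis
      using core_cone_eq_feas_dirs_if_cone[OF assms(2-4) cone] by simp
  qed
  have tangent: "\<forall>\<theta>\<in>C. core_cone C \<subseteq> tangent_cone C \<theta>"
    using core_cone_subset_tangent_cone by blast
  show ?thesis
    using rays scaled tangent impI[OF cone_case] by (intro conjI)
qed

end
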